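(* Let $V=\{1,\#_p,\#_c,0\}$ and consider the truth-relation $\models_{\{1,\#_p\},\{1,\#_c\}}$. For every $n$ and every pair $(\mathcal{B}^p,\mathcal{B}^c)$ of premise/conclusion regularity rules for an $n$-ary connective, there is a unique truth function $f:V^n\to V$ satisfying this regularity rule at the level of truth values, i.e. such that for all $\gamma,\delta\subseteq V$ and $x_1,\dots,x_n\in V$: $\gamma\cup\{f(\vec x)\}\models\delta$ iff for all $(B_p,B_c)\in\mathcal{B}^p$, $\gamma\cup\{x_i:i\in B_p\}\models\{x_i:i\in B_c\}\cup\delta$; and $\gamma\models\{f(\vec x)\}\cup\delta$ iff for all $(B_p,B_c)\in\mathcal{B}^c$, $\gamma\cup\{x_i:i\in B_p\}\models\{x_i:i\in B_c\}\cup\delta$.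
   Context: Here $\models_{\mathcal{D}_p,\mathcal{D}_c}$ denotes the relation on $\mathcal{P}(V)\times\mathcal{P}(V)$: $\gamma\models_{\mathcal{D}_p,\mathcal{D}_c}\delta$ iff ($\gamma\subseteq\mathcal{D}_p\Rightarrow\delta\cap\mathcal{D}_c\neq\emptyset$). A regularity rule for an $n$-ary connective is a pair $\mathcal{B}^p,\mathcal{B}^c\subseteq\mathcal{P}(\{1,\dots,n\})\times\mathcal{P}(\{1,\dots,n\})$. Empty conjunctions count as true. *)

theory Defs
  imports Main
begin

datatype V = One | Hp | Hc | Zero

definition Dp :: "V set" where "Dp = {One, Hp}"
definition Dc :: "V set" where "Dc = {One, Hc}"

definition models :: "V set \<Rightarrow> V set \<Rightarrow> bool" where
  "models \<gamma> \<delta> \<longleftrightarrow> (\<gamma> \<subseteq> Dp \<longrightarrow> \<delta> \<inter> Dc \<noteq> {})"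

definition rule_set :: "nat \<Rightarrow> (nat set \<times> nat set) set \<Rightarrow> bool" where
  "rule_set n B \<longleftrightarrow> (\<forall>(Bp, Bc)\<in>B. Bp \<subseteq> {1..n} \<and> Bc \<subseteq> {1..n})"

text \<open>Tuples x_1..x_n in V^n are lists of length n; x_i = xs ! (i - 1).\<close>
definition vals :: "V list \<Rightarrow> nat set \<Rightarrow> V set" where
  "vals xs B = {xs ! (i - 1) | i. i \<in> B}"

definition satisfies_rule ::
  "nat \<Rightarrow> (nat set \<times> nat set) set \<Rightarrow> (nat set \<times> nat set) set \<Rightarrow> (V list \<Rightarrow> V) \<Rightarrow> bool" where
  "satisfies_rule n BP BC f \<longleftrightarrow>
     (\<forall>\<gamma> \<delta> xs. length xs = n \<longrightarrow>
        (models (\<gamma> \<union> {f xs}) \<delta> \<longleftrightarrow>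
           (\<forall>(Bp, Bc)\<in>BP. models (\<gamma> \<union> vals xs Bp) (vals xs Bc \<union> \<delta>))) \<and>
        (models \<gamma> ({f xs} \<union> \<delta>) \<longleftrightarrow>
           (\<forall>(Bp, Bc)\<in>BC. models (\<gamma> \<union> vals xs Bp) (vals xs Bc \<union> \<delta>))))"

end

theory Submission
  imports Defs
begin

text \<open>
  Side formulas can be moved out of a sequent: \<open>\<gamma> \<union> X \<Turnstile> Y \<union> \<delta>\<close> holds iff either the context
  already holds (\<open>\<gamma> \<nsubseteq> Dp\<close> or \<open>\<delta>\<close> meets \<open>Dc\<close>) or \<open>X \<Turnstile> Y\<close>. Hence both conditions of the
  regularity rule only have to be checked for empty contexts, where they say that \<open>f xs \<notin> Dp\<close>
  and \<open>f xs \<in> Dc\<close> are equivalent to the premise and conclusion rules respectively. A truth value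
  is determined by its membership in \<open>Dp\<close> and \<open>Dc\<close>, and all four combinations occur in \<open>V\<close>,
  so these two equivalences determine \<open>f xs\<close> uniquely.
\<close>

lemma models_union_context:
  "models (\<gamma> \<union> X) (Y \<union> \<delta>) \<longleftrightarrow> (\<gamma> \<subseteq> Dp \<and> \<delta> \<inter> Dc = {} \<longrightarrow> models X Y)"
  unfolding models_def by blast

lemma models_singleton_left: "models {v} {} \<longleftrightarrow> v \<notin> Dp"
  unfolding models_def by blast

lemma models_singleton_right: "models {} {v} \<longleftrightarrow> v \<in> Dc"
  unfolding models_def by blast

definition rule_holds :: "(nat set \<times> nat set) set \<Rightarrow> V list \<Rightarrow> bool" where
  "rule_holds B xs \<longleftrightarrow> (\<forall>(Bp, Bc)\<in>B. models (vals xs Bp) (vals xs Bc))"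

lemma rule_in_context_iff:
  "(\<forall>\<gamma> \<delta>. models (\<gamma> \<union> X) (Y \<union> \<delta>) \<longleftrightarrow>
      (\<forall>(Bp, Bc)\<in>B. models (\<gamma> \<union> vals xs Bp) (vals xs Bc \<union> \<delta>)))
   \<longleftrightarrow> (models X Y \<longleftrightarrow> rule_holds B xs)"
proof
  assume "\<forall>\<gamma> \<delta>. models (\<gamma> \<union> X) (Y \<union> \<delta>) \<longleftrightarrow>
            (\<forall>(Bp, Bc)\<in>B. models (\<gamma> \<union> vals xs Bp) (vals xs Bc \<union> \<delta>))"
  from this[rule_format, of "{}" "{}"] show "models X Y \<longleftrightarrow> rule_holds B xs"
    by (simp add: rule_holds_def)
next
  assume "models X Y \<longleftrightarrow> rule_holds B xs"
  then show "\<forall>\<gamma> \<delta>. models (\<gamma> \<union> X) (Y \<union> \<delta>) \<longleftrightarrow>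
               (\<forall>(Bp, Bc)\<in>B. models (\<gamma> \<union> vals xs Bp) (vals xs Bc \<union> \<delta>))"
    unfolding models_union_context rule_holds_def by auto
qed

lemma satisfies_rule_iff:
  "satisfies_rule n BP BC f \<longleftrightarrow>
   (\<forall>xs. length xs = n \<longrightarrow> (f xs \<notin> Dp \<longleftrightarrow> rule_holds BP xs) \<and> (f xs \<in> Dc \<longleftrightarrow> rule_holds BC xs))"
proof -
  have premise_iff: "(\<forall>\<gamma> \<delta>. models (\<gamma> \<union> {v}) \<delta> \<longleftrightarrow>
           (\<forall>(Bp, Bc)\<in>B. models (\<gamma> \<union> vals xs Bp) (vals xs Bc \<union> \<delta>)))
        \<longleftrightarrow> (v \<notin> Dp \<longleftrightarrow> rule_holds B xs)" for v B xs
    using rule_in_context_iff[of "{v}" "{}" B xs] by (simp add: models_singleton_left)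
  have conclusion_iff: "(\<forall>\<gamma> \<delta>. models \<gamma> ({v} \<union> \<delta>) \<longleftrightarrow>
           (\<forall>(Bp, Bc)\<in>B. models (\<gamma> \<union> vals xs Bp) (vals xs Bc \<union> \<delta>)))
        \<longleftrightarrow> (v \<in> Dc \<longleftrightarrow> rule_holds B xs)" for v B xs
    using rule_in_context_iff[of "{}" "{v}" B xs] by (simp add: models_singleton_right)
  show ?thesis
    unfolding satisfies_rule_def all_conj_distrib[symmetric] premise_iff[symmetric] conclusion_iff[symmetric]
    by blast
qed

lemma V_eqI_designated:
  "(a \<in> Dp \<longleftrightarrow> b \<in> Dp) \<Longrightarrow> (a \<in> Dc \<longleftrightarrow> b \<in> Dc) \<Longrightarrow> a = b"
  by (cases a; cases b; simp add: Dp_def Dc_def)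

definition V_of_designation :: "bool \<Rightarrow> bool \<Rightarrow> V" where
  "V_of_designation p c = (if p then (if c then One else Hp) else (if c then Hc else Zero))"

lemma V_of_designation_in_Dp: "V_of_designation p c \<in> Dp \<longleftrightarrow> p"
  by (simp add: V_of_designation_def Dp_def)

lemma V_of_designation_in_Dc: "V_of_designation p c \<in> Dc \<longleftrightarrow> c"
  by (simp add: V_of_designation_def Dc_def)

theorem theorem3p22:
  fixes n :: nat and BP BC :: "(nat set \<times> nat set) set"
  assumes "rule_set n BP" and "rule_set n BC"
  shows "\<exists>f. satisfies_rule n BP BC f \<and>
           (\<forall>g. satisfies_rule n BP BC g \<longrightarrow> (\<forall>xs. length xs = n \<longrightarrow> g xs = f xs))"
proof -
  define f where "f xs = V_of_designation (\<not> rule_holds BP xs) (rule_holds BC xs)" for xs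
  have f_sat: "satisfies_rule n BP BC f"
    unfolding satisfies_rule_iff f_def V_of_designation_in_Dp V_of_designation_in_Dc by simp
  moreover have "g xs = f xs" if "satisfies_rule n BP BC g" "length xs = n" for g xs
  proof (rule V_eqI_designated)
    from that f_sat show "g xs \<in> Dp \<longleftrightarrow> f xs \<in> Dp" "g xs \<in> Dc \<longleftrightarrow> f xs \<in> Dc"
      unfolding satisfies_rule_iff by blast+
  qed
  ultimately show ?thesis by blast
qed

end
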